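(* Let $(A,* )$ be an involutive associative algebra over a field $\mathbb{K}$ of characteristic $0$. For $n\ge 1$ let $$iC^n_{\mathrm{Hoch}}(A,A)=\{f\in \mathrm{Hom}(A^{\otimes n},A)\mid f(a_1,\ldots,a_n)^*=(-1)^{\frac{(n-1)(n-2)}{2}} f(a_n^*,\ldots,a_1^* )\ \text{for all } a_i\in A\}.$$ If $m,n\ge 1$, $f\in iC^m_{\mathrm{Hoch}}(A,A)$ and $g\in iC^n_{\mathrm{Hoch}}(A,A)$, then the Gerstenhaber bracket $[f,g]$ lies in $iC^{m+n-1}_{\mathrm{Hoch}}(A,A)$.
   Context: An involutive associative algebra is an associative algebra $A$ with a linear map $*:A\to A$, $a\mapsto a^*$, such that $a^{**}=a$ and $(ab)^*=b^*a^*$ for all $a,b\in A$. For $f\in\mathrm{Hom}(A^{\otimes m},A)$, $g\in \mathrm{Hom}(A^{\otimes n},A)$ and $1\le i\le m$, let $(f\circ_i g)(a_1,\ldots,a_{m+n-1})=f(a_1,\ldots,a_{i-1},g(a_i,\ldots,a_{i+n-1}),a_{i+n},\ldots,a_{m+n-1})$. The Gerstenhaber bracket is $[f,g]=\sum_{i=1}^m(-1)^{(i-1)(n-1)}f\circ_i g-(-1)^{(m-1)(n-1)}\sum_{i=1}^n(-1)^{(i-1)(m-1)}g\circ_i f\in \mathrm{Hom}(A^{\otimes (m+n-1)},A)$. *)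

theory Defs
  imports Main
begin

definition inv_assoc_algebra :: "('k::field \<Rightarrow> 'a::ring \<Rightarrow> 'a) \<Rightarrow> ('a \<Rightarrow> 'a) \<Rightarrow> bool" where
  "inv_assoc_algebra sm st \<longleftrightarrow>
     (\<forall>c x y. sm c (x + y) = sm c x + sm c y) \<and>
     (\<forall>c d x. sm (c + d) x = sm c x + sm d x) \<and>
     (\<forall>c d x. sm c (sm d x) = sm (c * d) x) \<and>
     (\<forall>x. sm 1 x = x) \<and>
     (\<forall>c x y. sm c (x * y) = sm c x * y) \<and>
     (\<forall>c x y. sm c (x * y) = x * sm c y) \<and>
     (\<forall>x y. st (x + y) = st x + st y) \<and>
     (\<forall>c x. st (sm c x) = sm c (st x)) \<and>
     (\<forall>x. st (st x) = x) \<and>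
     (\<forall>x y. st (x * y) = st y * st x)"

text \<open>Elements of Hom(A^{\<otimes>n}, A) are represented as K-multilinear functions on
argument lists of length n (values on lists of other lengths are irrelevant).\<close>

definition multilinear :: "('k::field \<Rightarrow> 'a::ring \<Rightarrow> 'a) \<Rightarrow> nat \<Rightarrow> ('a list \<Rightarrow> 'a) \<Rightarrow> bool" where
  "multilinear sm n f \<longleftrightarrow>
     (\<forall>xs i a b. length xs = n \<longrightarrow> i < n \<longrightarrow>
        f (xs[i := a + b]) = f (xs[i := a]) + f (xs[i := b])) \<and>
     (\<forall>xs i c a. length xs = n \<longrightarrow> i < n \<longrightarrow>
        f (xs[i := sm c a]) = sm c (f (xs[i := a])))"

definition sgn_pow :: "nat \<Rightarrow> 'a::ring \<Rightarrow> 'a" where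
  "sgn_pow k x = (if even k then x else - x)"

definition iC_Hoch :: "('k::field \<Rightarrow> 'a::ring \<Rightarrow> 'a) \<Rightarrow> ('a \<Rightarrow> 'a) \<Rightarrow> nat \<Rightarrow> ('a list \<Rightarrow> 'a) set" where
  "iC_Hoch sm st n = {f. multilinear sm n f \<and>
     (\<forall>as. length as = n \<longrightarrow>
        st (f as) = sgn_pow (((n - 1) * (n - 2)) div 2) (f (rev (map st as))))}"

text \<open>Partial composition f \<circ>_i g, with i 1-based and g of arity n.\<close>
definition pcomp :: "('a list \<Rightarrow> 'a) \<Rightarrow> nat \<Rightarrow> nat \<Rightarrow> ('a list \<Rightarrow> 'a) \<Rightarrow> 'a list \<Rightarrow> 'a" where
  "pcomp f i n g as = f (take (i - 1) as @ [g (take n (drop (i - 1) as))] @ drop (i - 1 + n) as)"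

definition gerst :: "nat \<Rightarrow> ('a::ring list \<Rightarrow> 'a) \<Rightarrow> nat \<Rightarrow> ('a list \<Rightarrow> 'a) \<Rightarrow> 'a list \<Rightarrow> 'a" where
  "gerst m f n g as =
     (\<Sum>i=1..m. sgn_pow ((i - 1) * (n - 1)) (pcomp f i n g as))
     - sgn_pow ((m - 1) * (n - 1)) (\<Sum>i=1..n. sgn_pow ((i - 1) * (m - 1)) (pcomp g i m f as))"

end

theory Submission
  imports Defs HOL.Modules
begin

text \<open>Both summands of the Gerstenhaber bracket are signed sums of partial compositions, and
partial compositions of multilinear maps are multilinear. For the symmetry condition, applying
the involution to \<open>f \<circ>\<^sub>i g\<close> and reversing the arguments uses the symmetry of \<open>f\<close> and
of \<open>g\<close> and turns it into \<open>f \<circ>\<^bsub>m+1-i\<^esub> g\<close>, with sign exponent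
\<open>C(m-1,2) + C(n-1,2)\<close>. After reindexing \<open>i \<mapsto> m+1-i\<close>, the identity
\<open>C(m+n-2,2) = C(m-1,2) + C(n-1,2) + (m-1)(n-1)\<close> shows that the signs agree mod 2 with
those required in arity \<open>m+n-1\<close>.\<close>

lemma sgn_pow_sgn_pow: "sgn_pow k (sgn_pow l x) = sgn_pow (k + l) (x::'a::ring)"
  by (simp add: sgn_pow_def)

lemma sgn_pow_cong: "even k = even l \<Longrightarrow> sgn_pow k x = sgn_pow l x"
  by (simp add: sgn_pow_def)

lemma additive_sgn_pow: "additive (sgn_pow k :: 'a::ring \<Rightarrow> 'a)"
  by unfold_locales (simp add: sgn_pow_def)

lemma additive_commute_sgn_pow:
  fixes h :: "'a::ring \<Rightarrow> 'b::ring"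
  assumes "additive h"
  shows "h (sgn_pow k x) = sgn_pow k (h x)"
  by (simp add: sgn_pow_def additive.minus[OF assms])

definition scalar_linear :: "('k \<Rightarrow> 'a \<Rightarrow> 'a) \<Rightarrow> ('a::ab_group_add \<Rightarrow> 'a) \<Rightarrow> bool" where
  "scalar_linear sm h \<longleftrightarrow> additive h \<and> (\<forall>c x. h (sm c x) = sm c (h x))"

lemma scalar_linear_comp:
  "scalar_linear sm h \<Longrightarrow> scalar_linear sm k \<Longrightarrow> scalar_linear sm (\<lambda>x. h (k x))"
  by (simp add: scalar_linear_def additive_def)

lemma multilinear_iff_slots:
  fixes F :: "'a::ring list \<Rightarrow> 'a"
  shows "multilinear sm n F \<longleftrightarrow>
     (\<forall>A B. length A + length B + 1 = n \<longrightarrow> scalar_linear sm (\<lambda>x. F (A @ x # B)))"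
proof
  assume F: "multilinear sm n F"
  show "\<forall>A B. length A + length B + 1 = n \<longrightarrow> scalar_linear sm (\<lambda>x. F (A @ x # B))"
  proof (intro allI impI)
    fix A B :: "'a list" assume len: "length A + length B + 1 = n"
    define xs where "xs = A @ undefined # B"
    have slot: "A @ x # B = xs[length A := x]" for x by (simp add: xs_def)
    have "length xs = n" "length A < n" using len by (simp_all add: xs_def)
    with F show "scalar_linear sm (\<lambda>x. F (A @ x # B))"
      unfolding scalar_linear_def additive_def slot multilinear_def by blast
  qed
next
  assume slots: "\<forall>A B. length A + length B + 1 = n \<longrightarrow> scalar_linear sm (\<lambda>x. F (A @ x # B))"
  have "scalar_linear sm (\<lambda>x. F (xs[i := x]))" if "length xs = n" "i < n" for xs i
    using slots[rule_format, of "take i xs" "drop (Suc i) xs"] that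
    by (simp add: upd_conv_take_nth_drop)
  then show "multilinear sm n F"
    by (simp add: multilinear_def scalar_linear_def additive_def)
qed

definition graft :: "nat \<Rightarrow> nat \<Rightarrow> ('a list \<Rightarrow> 'a) \<Rightarrow> 'a list \<Rightarrow> 'a list" where
  "graft k q G xs = take k xs @ G (take q (drop k xs)) # drop (k + q) xs"

lemma pcomp_eq_graft: "pcomp F i q G = (\<lambda>xs. F (graft (i - 1) q G xs))"
  by (simp add: fun_eq_iff pcomp_def graft_def)

lemma length_graft: "k + q \<le> length xs \<Longrightarrow> length (graft k q G xs) = length xs + 1 - q"
  by (simp add: graft_def)

lemma graft_cong:
  "(\<And>ys. length ys = q \<Longrightarrow> G ys = G' ys) \<Longrightarrow> k + q \<le> length xs \<Longrightarrow>
    graft k q G xs = graft k q G' xs"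
  by (simp add: graft_def)

lemma graft_slot_before:
  "length A < k \<Longrightarrow> graft k q G (A @ x # B) = A @ x # graft (k - Suc (length A)) q G B"
  by (simp add: graft_def take_Cons' drop_Cons')

lemma graft_slot_after:
  "k + q \<le> length A \<Longrightarrow> graft k q G (A @ x # B) = graft k q G A @ x # B"
  by (simp add: graft_def)

lemma graft_slot_inside:
  assumes "k \<le> length A" "length A < k + q"
  shows "graft k q G (A @ x # B) =
    take k A @ G (drop k A @ x # take (k + q - Suc (length A)) B) # drop (k + q - Suc (length A)) B"
  using assms by (simp add: graft_def take_Cons' drop_Cons' add.commute)

lemma rev_map_graft:
  assumes "\<And>x. h (h x) = x" "k + q \<le> length xs"
  shows "rev (map h (graft k q G xs)) =
    graft (length xs - (k + q)) q (\<lambda>ys. h (G (rev (map h ys)))) (rev (map h xs))"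
  using assms by (simp add: graft_def rev_map rev_take rev_drop take_map drop_map take_drop comp_def)

lemma multilinear_graft:
  fixes F G :: "'a::ring list \<Rightarrow> 'a"
  assumes "multilinear sm p F" and "multilinear sm q G" and "k < p"
  shows "multilinear sm (p + q - 1) (\<lambda>xs. F (graft k q G xs))"
  unfolding multilinear_iff_slots
proof (intro allI impI)
  fix A B :: "'a list"
  assume len: "length A + length B + 1 = p + q - 1"
  have F: "scalar_linear sm (\<lambda>x. F (A' @ x # B'))" if "length A' + length B' + 1 = p" for A' B'
    using assms(1) that by (simp add: multilinear_iff_slots)
  have G: "scalar_linear sm (\<lambda>x. G (A' @ x # B'))" if "length A' + length B' + 1 = q" for A' B'
    using assms(2) that by (simp add: multilinear_iff_slots)
  consider "length A < k" | "k + q \<le> length A" | "k \<le> length A" "length A < k + q"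
    by linarith
  then show "scalar_linear sm (\<lambda>x. F (graft k q G (A @ x # B)))"
  proof cases
    case 1
    then show ?thesis
      using F[of A "graft (k - Suc (length A)) q G B"] len assms(3)
      by (simp add: graft_slot_before length_graft)
  next
    case 2
    then show ?thesis
      using F[of "graft k q G A" B] len by (simp add: graft_slot_after length_graft)
  next
    case 3
    define r where "r = k + q - Suc (length A)"
    have "scalar_linear sm (\<lambda>x. F (take k A @ G (drop k A @ x # take r B) # drop r B))"
      using scalar_linear_comp[OF F[of "take k A" "drop r B"] G[of "drop k A" "take r B"]]
        3 len assms(3) by (simp add: r_def)
    with 3 show ?thesis by (simp add: graft_slot_inside r_def)
  qed
qed

lemma multilinear_diff:
  "(\<And>c. additive (sm c)) \<Longrightarrow> multilinear sm n f \<Longrightarrow> multilinear sm n g \<Longrightarrow>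
    multilinear sm n (\<lambda>xs. f xs - g xs)"
  by (simp add: multilinear_def additive.diff)

lemma multilinear_sgn_pow:
  "(\<And>c. additive (sm c)) \<Longrightarrow> multilinear sm n f \<Longrightarrow> multilinear sm n (\<lambda>xs. sgn_pow k (f xs))"
  by (simp add: multilinear_def additive_commute_sgn_pow additive.add[OF additive_sgn_pow])

lemma multilinear_sum:
  "(\<And>c. additive (sm c)) \<Longrightarrow> (\<And>i. i \<in> S \<Longrightarrow> multilinear sm n (h i)) \<Longrightarrow>
    multilinear sm n (\<lambda>xs. \<Sum>i\<in>S. h i xs)"
  by (simp add: multilinear_def additive.sum sum.distrib)

lemma multilinear_gerst:
  assumes "\<And>c. additive (sm c)" "multilinear sm p F" "multilinear sm q G" "1 \<le> p" "1 \<le> q"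
  shows "multilinear sm (p + q - 1) (gerst p F q G)"
proof -
  have "multilinear sm (p + q - 1) (pcomp F i q G)" if "i \<in> {1..p}" for i
    unfolding pcomp_eq_graft by (rule multilinear_graft[OF assms(2,3)]) (use that in auto)
  moreover have "multilinear sm (p + q - 1) (pcomp G i p F)" if "i \<in> {1..q}" for i
    unfolding pcomp_eq_graft add.commute[of p]
    by (rule multilinear_graft[OF assms(3,2)]) (use that in auto)
  ultimately show ?thesis
    unfolding gerst_def[abs_def]
    by (intro multilinear_diff multilinear_sgn_pow multilinear_sum assms(1))
qed

lemma multilinear_graft_sgn_pow:
  assumes "multilinear sm p F" "k < p" "length xs = p + q - 1"
  shows "F (graft k q (\<lambda>ys. sgn_pow e (G ys)) xs) = sgn_pow e (F (graft k q G xs))"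
proof -
  define A B where "A = take k xs" and "B = drop (k + q) xs"
  have "additive (\<lambda>x. F (A @ x # B))"
    using assms by (simp add: multilinear_iff_slots scalar_linear_def A_def B_def)
  from additive_commute_sgn_pow[OF this] show ?thesis
    unfolding graft_def A_def[symmetric] B_def[symmetric] by simp
qed

lemma involution_pcomp:
  assumes st: "\<And>x. st (st x) = x"
    and F: "F \<in> iC_Hoch sm st p" and G: "G \<in> iC_Hoch sm st q"
    and i: "1 \<le> i" "i \<le> p" and len: "length as = p + q - 1"
  shows "st (pcomp F i q G as) = sgn_pow ((p - 1) * (p - 2) div 2 + (q - 1) * (q - 2) div 2)
           (pcomp F (p + 1 - i) q G (rev (map st as)))"
proof -
  define bs where "bs = rev (map st as)"
  have "st (pcomp F i q G as) =
      sgn_pow ((p - 1) * (p - 2) div 2) (F (rev (map st (graft (i - 1) q G as))))"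
    using F i len by (simp add: iC_Hoch_def pcomp_eq_graft length_graft)
  also have "rev (map st (graft (i - 1) q G as)) =
      graft (p - i) q (\<lambda>ys. st (G (rev (map st ys)))) bs"
    using rev_map_graft[of st "i - 1" q as G] st i len by (simp add: bs_def)
  also have "\<dots> = graft (p - i) q (\<lambda>ys. sgn_pow ((q - 1) * (q - 2) div 2) (G ys)) bs"
    using G i len st by (intro graft_cong) (simp_all add: iC_Hoch_def bs_def rev_map comp_def)
  also have "F \<dots> = sgn_pow ((q - 1) * (q - 2) div 2) (F (graft (p - i) q G bs))"
    using F i len
    by (intro multilinear_graft_sgn_pow[where sm = sm]) (simp_all add: iC_Hoch_def bs_def)
  finally show ?thesis
    using i by (simp add: pcomp_eq_graft sgn_pow_sgn_pow bs_def)
qed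

lemma triangular_add:
  "(a + b) * (a + b - 1) div 2 = a * (a - 1) div 2 + b * (b - 1) div 2 + a * (b::nat)"
proof -
  have "(a + b) * (a + b - 1) = a * (a - 1) + b * (b - 1) + 2 * a * b"
    by (cases a; cases b) (simp_all add: algebra_simps)
  moreover have "even (x * (x - 1))" for x :: nat
    by (cases x) auto
  ultimately show ?thesis
    by (auto elim!: evenE)
qed

lemma pcomp_sign_parity:
  fixes j p q :: nat
  assumes "1 \<le> j" "j \<le> p" "1 \<le> q"
  shows "even ((p - j) * (q - 1) + ((p - 1) * (p - 2) div 2 + (q - 1) * (q - 2) div 2)) =
         even ((p + q - 1 - 1) * (p + q - 1 - 2) div 2 + (j - 1) * (q - 1))"
proof -
  define a b c where "a = j - 1" and "b = p - j" and "c = q - 1"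
  then have p: "p = a + b + 1" and j: "j = a + 1" and q: "q = c + 1"
    using assms by simp_all
  define T where "T = (a + b) * (a + b - 1) div 2 + c * (c - 1) div 2"
  have "(p - j) * (q - 1) + ((p - 1) * (p - 2) div 2 + (q - 1) * (q - 2) div 2) = b * c + T"
    by (simp add: p j q T_def numeral_2_eq_2)
  moreover have
    "(p + q - 1 - 1) * (p + q - 1 - 2) div 2 + (j - 1) * (q - 1) = b * c + T + 2 * (a * c)"
    using triangular_add[of "a + b" c] by (simp add: p j q T_def numeral_2_eq_2 algebra_simps)
  ultimately show ?thesis
    by simp
qed

lemma involution_pcomp_sum:
  assumes st: "additive st" "\<And>x. st (st x) = x"
    and F: "F \<in> iC_Hoch sm st p" and G: "G \<in> iC_Hoch sm st q"
    and q: "1 \<le> q" and len: "length as = p + q - 1"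
  shows "st (\<Sum>i=1..p. sgn_pow ((i - 1) * (q - 1)) (pcomp F i q G as)) =
    (\<Sum>i=1..p. sgn_pow ((p + q - 1 - 1) * (p + q - 1 - 2) div 2 + (i - 1) * (q - 1))
                  (pcomp F i q G (rev (map st as))))"
proof -
  define bs where "bs = rev (map st as)"
  define H where "H j =
    sgn_pow ((p - j) * (q - 1) + ((p - 1) * (p - 2) div 2 + (q - 1) * (q - 2) div 2))
      (pcomp F j q G bs)" for j
  have "st (\<Sum>i=1..p. sgn_pow ((i - 1) * (q - 1)) (pcomp F i q G as)) =
      (\<Sum>i=1..p. H (p + 1 - i))"
    unfolding additive.sum[OF st(1)]
  proof (rule sum.cong)
    fix i assume "i \<in> {1..p}"
    then have i: "1 \<le> i" "i \<le> p" and "p - (p + 1 - i) = i - 1" by auto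
    then show "st (sgn_pow ((i - 1) * (q - 1)) (pcomp F i q G as)) = H (p + 1 - i)"
      unfolding additive_commute_sgn_pow[OF st(1)] involution_pcomp[OF st(2) F G i len] H_def bs_def
      by (simp add: sgn_pow_sgn_pow)
  qed simp
  also have "\<dots> = (\<Sum>i=1..p. H i)"
    using sum.atLeastAtMost_rev[of H 1 p] by simp
  also have "\<dots> = (\<Sum>i=1..p. sgn_pow ((p + q - 1 - 1) * (p + q - 1 - 2) div 2 + (i - 1) * (q - 1))
                  (pcomp F i q G bs))"
    unfolding H_def using pcomp_sign_parity q by (intro sum.cong sgn_pow_cong) auto
  finally show ?thesis
    by (simp add: bs_def)
qed

lemma involution_gerst:
  assumes st: "additive st" "\<And>x. st (st x) = x"
    and F: "F \<in> iC_Hoch sm st p" and G: "G \<in> iC_Hoch sm st q"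
    and p: "1 \<le> p" and q: "1 \<le> q" and len: "length as = p + q - 1"
  shows "st (gerst p F q G as) =
    sgn_pow ((p + q - 1 - 1) * (p + q - 1 - 2) div 2) (gerst p F q G (rev (map st as)))"
proof -
  have len': "length as = q + p - 1"
    using len by simp
  show ?thesis
    unfolding gerst_def additive.diff[OF st(1)] additive_commute_sgn_pow[OF st(1)]
      involution_pcomp_sum[OF st F G q len] involution_pcomp_sum[OF st G F p len'] add.commute[of q p]
    by (simp add: additive.diff[OF additive_sgn_pow] additive.sum[OF additive_sgn_pow]
        sgn_pow_sgn_pow add_ac)
qed

lemma inv_assoc_algebra_additive:
  assumes "inv_assoc_algebra sm st"
  shows "additive st" and "additive (sm c)"
  using assms by (simp_all add: inv_assoc_algebra_def additive_def)

theorem mainTheorem1: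
  fixes sm :: "'k::field_char_0 \<Rightarrow> 'a::ring \<Rightarrow> 'a"
    and st :: "'a \<Rightarrow> 'a"
    and f g :: "'a list \<Rightarrow> 'a"
    and m n :: nat
  assumes "inv_assoc_algebra sm st"
    and "m \<ge> 1" and "n \<ge> 1"
    and "f \<in> iC_Hoch sm st m"
    and "g \<in> iC_Hoch sm st n"
  shows "gerst m f n g \<in> iC_Hoch sm st (m + n - 1)"
proof -
  have involutive: "st (st x) = x" for x
    using assms(1) by (simp add: inv_assoc_algebra_def)
  have "multilinear sm (m + n - 1) (gerst m f n g)"
    using assms by (intro multilinear_gerst inv_assoc_algebra_additive) (simp_all add: iC_Hoch_def)
  moreover have "st (gerst m f n g as) =
      sgn_pow ((m + n - 1 - 1) * (m + n - 1 - 2) div 2) (gerst m f n g (rev (map st as)))"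
    if "length as = m + n - 1" for as
    using involution_gerst[OF inv_assoc_algebra_additive(1)[OF assms(1)] involutive
        assms(4-5,2-3) that] .
  ultimately show ?thesis
    by (simp add: iC_Hoch_def)
qed

end
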